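(* Let $G=(V,F,E)$ be a factor tree, i.e. a connected bipartite graph without cycles whose vertex set is partitioned into variable nodes $V=\{1,\dots,J\}$ and factor nodes $F$, with every edge joining a variable node to a factor node. For $j\in V$ let $N(j)\subset F$ be its set of neighbouring factor nodes and $N_j=|N(j)|$; for $\alpha\in F$ let $N(\alpha)\subset V$ be its set of neighbouring variable nodes. Each variable node $j$ carries a discrete variable $x_j$ taking $d_j$ values, and for $\alpha\in F$ write $\mathbf{x}_\alpha=(x_j)_{j\in N(\alpha)}$. Let $\epsilon>0$, let $C_\alpha(\mathbf{x}_\alpha)\in\mathbb{R}$ be given cost functions for $\alpha\in F$, and set $K_\alpha(\mathbf{x}_\alpha)=\exp(-C_\alpha(\mathbf{x}_\alpha)/\epsilon)$. Let $\Gamma\subset V$ be a set of leaf variable nodes (nodes $j$ with $N_j=1$), and for each $j\in\Gamma$ let $\boldsymbol\mu_j$ be a given probability vector on the values of $x_j$. Consider the optimization problem over nonnegative local marginals $\mathbf{B}=\{\mathbf{B}_j,\mathbf{B}_\alpha: j\in V,\alpha\in F\}$: $$\min_{\mathbf{B}}\ \sum_{\alpha\in F}\sum_{\mathbf{x}_\alpha}B_\alpha(\mathbf{x}_\alpha)C_\alpha(\mathbf{x}_\alpha)+\epsilon\sum_{\alpha\in F}\sum_{\mathbf{x}_\alpha}B_\alpha(\mathbf{x}_\alpha)\ln B_\alpha(\mathbf{x}_\alpha)-\epsilon\sum_{j\in V}(N_j-1)\sum_{x_j}B_j(x_j)\ln B_j(x_j)$$ subject to $B_j(x_j)=\mu_j(x_j)$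 for all $j\in\Gamma$ and all $x_j$; $\sum_{\mathbf{x}_\alpha\setminus x_j}B_\alpha(\mathbf{x}_\alpha)=B_j(x_j)$ for all $j\in V$, $\alpha\in N(j)$, and all $x_j$; and $\sum_{\mathbf{x}_\alpha}B_\alpha(\mathbf{x}_\alpha)=1$ for all $\alpha\in F$. Then the solution of this problem is given by $$B_\alpha(\mathbf{x}_\alpha)\propto K_\alpha(\mathbf{x}_\alpha)\prod_{j\in N(\alpha)}n_{j\to\alpha}(x_j)\ \ (\alpha\in F),\qquad B_j(x_j)\propto\prod_{\alpha\in N(j)}m_{\alpha\to j}(x_j)\ \ (j\notin\Gamma),\qquad B_j(x_j)=\mu_j(x_j)\ \ (j\in\Gamma),$$ where the messages $m_{\alpha\to j},n_{j\to\alpha}$ are fixed points of the iterations $$m_{\alpha\to j}(x_j)\propto\sum_{\mathbf{x}_\alpha\setminus x_j}K_\alpha(\mathbf{x}_\alpha)\prod_{i\in N(\alpha)\setminus j}n_{i\to\alpha}(x_i)\quad(j\in V,\ \alpha\in N(j)),$$ $$n_{j\to\alpha}(x_j)\propto\prod_{\beta\in N(j)\setminus\alpha}m_{\beta\to j}(x_j)\quad(j\notin\Gamma,\ \alpha\in N(j)),$$ $$n_{j\to\alpha}(x_j)\propto\mu_j(x_j)\,\big(m_{\alpha\to j}(x_j)\big)^{-1}\quad(j\in\Gamma,\ \alpha\in N(j)).$$ Here $\propto$ means equality up to a positive normalizing constant.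
   Context: The notation $\sum_{\mathbf{x}_\alpha\setminus x_j}$ denotes summation over all variables $x_i$, $i\in N(\alpha)\setminus\{j\}$, with $x_j$ held fixed; an empty product equals $1$. The objective is the (scaled) Bethe free energy associated with the entropy-regularized multi-marginal optimal transport problem whose cost tensor decomposes as $C(\mathbf{x})=\sum_{\alpha\in F}C_\alpha(\mathbf{x}_\alpha)$ over the factor tree. *)

theory Defs
  imports Complex_Main "HOL-Library.FuncSet"
begin

definition fg_nodes :: "'v set \<Rightarrow> 'f set \<Rightarrow> ('v + 'f) set" where
  "fg_nodes V F = Inl ` V \<union> Inr ` F"

definition fg_adj :: "('v \<times> 'f) set \<Rightarrow> 'v + 'f \<Rightarrow> 'v + 'f \<Rightarrow> bool" where
  "fg_adj E u w \<longleftrightarrow> (\<exists>j \<alpha>. (j, \<alpha>) \<in> E \<and>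
      ((u = Inl j \<and> w = Inr \<alpha>) \<or> (u = Inr \<alpha> \<and> w = Inl j)))"

definition fg_connected :: "'v set \<Rightarrow> 'f set \<Rightarrow> ('v \<times> 'f) set \<Rightarrow> bool" where
  "fg_connected V F E \<longleftrightarrow>
     (\<forall>u \<in> fg_nodes V F. \<forall>w \<in> fg_nodes V F. (u, w) \<in> {(a, b). fg_adj E a b}\<^sup>*)"

definition fg_acyclic :: "('v \<times> 'f) set \<Rightarrow> bool" where
  "fg_acyclic E \<longleftrightarrow> \<not> (\<exists>cs. length cs \<ge> 3 \<and> distinct cs \<and>
      (\<forall>i < length cs. fg_adj E (cs ! i) (cs ! ((i + 1) mod length cs))))"

definition factor_tree :: "'v set \<Rightarrow> 'f set \<Rightarrow> ('v \<times> 'f) set \<Rightarrow> bool" where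
  "factor_tree V F E \<longleftrightarrow> finite V \<and> finite F \<and> E \<subseteq> V \<times> F \<and>
     fg_connected V F E \<and> fg_acyclic E"

definition nbF :: "'f set \<Rightarrow> ('v \<times> 'f) set \<Rightarrow> 'v \<Rightarrow> 'f set" where
  "nbF F E j = {\<alpha> \<in> F. (j, \<alpha>) \<in> E}"

definition nbV :: "'v set \<Rightarrow> ('v \<times> 'f) set \<Rightarrow> 'f \<Rightarrow> 'v set" where
  "nbV V E \<alpha> = {j \<in> V. (j, \<alpha>) \<in> E}"

definition configs :: "'v set \<Rightarrow> ('v \<times> 'f) set \<Rightarrow> ('v \<Rightarrow> nat) \<Rightarrow> 'f \<Rightarrow> ('v \<Rightarrow> nat) set" where
  "configs V E d \<alpha> = (\<Pi>\<^sub>E i \<in> nbV V E \<alpha>. {..<d i})"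

text \<open>Configurations of alpha with x_j held fixed at value a (summation over x_alpha \ x_j).\<close>
definition configs_fix ::
  "'v set \<Rightarrow> ('v \<times> 'f) set \<Rightarrow> ('v \<Rightarrow> nat) \<Rightarrow> 'f \<Rightarrow> 'v \<Rightarrow> nat \<Rightarrow> ('v \<Rightarrow> nat) set" where
  "configs_fix V E d \<alpha> j a = {x \<in> configs V E d \<alpha>. x j = a}"

definition xlnx :: "real \<Rightarrow> real" where
  "xlnx t = (if t = 0 then 0 else t * ln t)"

definition bethe ::
  "'v set \<Rightarrow> 'f set \<Rightarrow> ('v \<times> 'f) set \<Rightarrow> ('v \<Rightarrow> nat) \<Rightarrow> real \<Rightarrow>
   ('f \<Rightarrow> ('v \<Rightarrow> nat) \<Rightarrow> real) \<Rightarrow>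
   ('v \<Rightarrow> nat \<Rightarrow> real) \<Rightarrow> ('f \<Rightarrow> ('v \<Rightarrow> nat) \<Rightarrow> real) \<Rightarrow> real" where
  "bethe V F E d \<epsilon> C Bv Bf =
     (\<Sum>\<alpha>\<in>F. \<Sum>x\<in>configs V E d \<alpha>. Bf \<alpha> x * C \<alpha> x)
     + \<epsilon> * (\<Sum>\<alpha>\<in>F. \<Sum>x\<in>configs V E d \<alpha>. xlnx (Bf \<alpha> x))
     - \<epsilon> * (\<Sum>j\<in>V. (real (card (nbF F E j)) - 1) * (\<Sum>a<d j. xlnx (Bv j a)))"

definition feasible ::
  "'v set \<Rightarrow> 'f set \<Rightarrow> ('v \<times> 'f) set \<Rightarrow> ('v \<Rightarrow> nat) \<Rightarrow> 'v set \<Rightarrow> ('v \<Rightarrow> nat \<Rightarrow> real) \<Rightarrow>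
   ('v \<Rightarrow> nat \<Rightarrow> real) \<Rightarrow> ('f \<Rightarrow> ('v \<Rightarrow> nat) \<Rightarrow> real) \<Rightarrow> bool" where
  "feasible V F E d \<Gamma> \<mu> Bv Bf \<longleftrightarrow>
     (\<forall>j\<in>V. \<forall>a<d j. Bv j a \<ge> 0) \<and>
     (\<forall>\<alpha>\<in>F. \<forall>x\<in>configs V E d \<alpha>. Bf \<alpha> x \<ge> 0) \<and>
     (\<forall>j\<in>\<Gamma>. \<forall>a<d j. Bv j a = \<mu> j a) \<and>
     (\<forall>j\<in>V. \<forall>\<alpha>\<in>nbF F E j. \<forall>a<d j. (\<Sum>x\<in>configs_fix V E d \<alpha> j a. Bf \<alpha> x) = Bv j a) \<and>
     (\<forall>\<alpha>\<in>F. (\<Sum>x\<in>configs V E d \<alpha>. Bf \<alpha> x) = 1)"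

text \<open>m alpha j a = m_{alpha -> j}(a), n j alpha a = n_{j -> alpha}(a).
  K alpha x = exp(- C alpha x / epsilon).\<close>

definition bp_factor_belief ::
  "'v set \<Rightarrow> ('v \<times> 'f) set \<Rightarrow> ('v \<Rightarrow> nat) \<Rightarrow> real \<Rightarrow> ('f \<Rightarrow> ('v \<Rightarrow> nat) \<Rightarrow> real) \<Rightarrow>
   ('v \<Rightarrow> 'f \<Rightarrow> nat \<Rightarrow> real) \<Rightarrow> 'f \<Rightarrow> ('v \<Rightarrow> nat) \<Rightarrow> real" where
  "bp_factor_belief V E d \<epsilon> C n \<alpha> x =
     (let w = (\<lambda>y. exp (- C \<alpha> y / \<epsilon>) * (\<Prod>j\<in>nbV V E \<alpha>. n j \<alpha> (y j)))
      in w x / (\<Sum>y\<in>configs V E d \<alpha>. w y))"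

definition bp_var_belief ::
  "'f set \<Rightarrow> ('v \<times> 'f) set \<Rightarrow> ('v \<Rightarrow> nat) \<Rightarrow> 'v set \<Rightarrow> ('v \<Rightarrow> nat \<Rightarrow> real) \<Rightarrow>
   ('f \<Rightarrow> 'v \<Rightarrow> nat \<Rightarrow> real) \<Rightarrow> 'v \<Rightarrow> nat \<Rightarrow> real" where
  "bp_var_belief F E d \<Gamma> \<mu> m j a =
     (if j \<in> \<Gamma> then \<mu> j a
      else (\<Prod>\<alpha>\<in>nbF F E j. m \<alpha> j a) / (\<Sum>b<d j. \<Prod>\<alpha>\<in>nbF F E j. m \<alpha> j b))"

end

theory Submission
  imports Defs
begin

text \<open>For feasible beliefs B the Bethe free energy equals epsilon times
  sum_alpha KL(B_alpha | b_alpha) - sum_j (N_j - 1) KL(B_j | b_j) + R(B), where b are the beliefs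
  built from the messages and R is linear in the variable marginals. The fixed-point equations make
  the coefficient of B_j(a) in R independent of a when j is not in Gamma, and B_j = mu_j when it is,
  so R is constant on the feasible set. The edges of a factor forest can be oriented so that every
  node has in-degree at most one; charging KL(B_j | b_j) to the heads of the outgoing edges of j and
  using that marginalisation does not increase relative entropy shows that the divergence part is
  nonnegative. It vanishes at B = b.\<close>

section \<open>Orientations of factor forests\<close>

definition fg_path :: "('v \<times> 'f) set \<Rightarrow> ('v + 'f) list \<Rightarrow> bool" where
  "fg_path E p \<longleftrightarrow> distinct p \<and> successively (fg_adj E) p"

definition fg_support :: "('v \<times> 'f) set \<Rightarrow> ('v + 'f) set" where
  "fg_support E = Inl ` fst ` E \<union> Inr ` snd ` E"

lemma fg_adj_in_support: "fg_adj E u w \<Longrightarrow> w \<in> fg_support E"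
  unfolding fg_adj_def fg_support_def by force

lemma fg_adj_irrefl: "\<not> fg_adj E u u"
  unfolding fg_adj_def by blast

lemma fg_acyclic_subset: "E' \<subseteq> E \<Longrightarrow> fg_acyclic E \<Longrightarrow> fg_acyclic E'"
  unfolding fg_acyclic_def fg_adj_def by blast

lemma not_fg_acyclicI:
  assumes "length cs \<ge> 3" "fg_path E cs" "fg_adj E (last cs) (hd cs)"
  shows "\<not> fg_acyclic E"
proof -
  have "fg_adj E (cs ! i) (cs ! ((i + 1) mod length cs))" if "i < length cs" for i
  proof (cases "Suc i < length cs")
    case True
    then show ?thesis using assms(2) successively_nth unfolding fg_path_def by fastforce
  next
    case False
    then have "i = length cs - 1" "i + 1 = length cs" using that by auto
    moreover have "cs \<noteq> []" using assms(1) by auto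
    ultimately show ?thesis using assms(3) by (simp add: last_conv_nth hd_conv_nth)
  qed
  then show ?thesis using assms(1,2) unfolding fg_acyclic_def fg_path_def by blast
qed

lemma fg_path_drop: "fg_path E p \<Longrightarrow> fg_path E (drop i p)"
  unfolding fg_path_def by (metis append_take_drop_id distinct_drop successively_append_iff)

text \<open>Any other neighbour of the endpoint would either extend the path or close a cycle.\<close>
lemma fg_acyclic_longest_path_end:
  assumes acyclic: "fg_acyclic E" and path: "fg_path E (p @ [v, u])"
    and longest: "\<And>q. fg_path E q \<Longrightarrow> set q \<subseteq> fg_support E \<Longrightarrow> length q \<le> length (p @ [v, u])"
    and support: "set (p @ [v, u]) \<subseteq> fg_support E"
    and adj: "fg_adj E u w"
  shows "w = v"
proof (rule ccontr)
  assume "w \<noteq> v"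
  show False
  proof (cases "w \<in> set (p @ [v, u])")
    case False
    then have "fg_path E (p @ [v, u, w])" "set (p @ [v, u, w]) \<subseteq> fg_support E"
      using path support adj fg_adj_in_support unfolding fg_path_def
      by (auto simp: successively_append_iff)
    then show False using longest by fastforce
  next
    case True
    with \<open>w \<noteq> v\<close> fg_adj_irrefl adj obtain i where i: "i < length p" "p ! i = w"
      by (auto simp: in_set_conv_nth)
    let ?cs = "drop i (p @ [v, u])"
    have "length ?cs \<ge> 3" "fg_path E ?cs" using i(1) fg_path_drop[OF path, of i] by auto
    moreover have "last ?cs = u" "hd ?cs = w" using i by (auto simp: hd_drop_conv_nth nth_append)
    ultimately show False using not_fg_acyclicI adj acyclic by metis
  qed
qed

lemma fg_acyclic_leaf_edge:
  assumes "finite E" "E \<noteq> {}" "fg_acyclic E"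
  obtains j \<alpha> where "(j, \<alpha>) \<in> E" "(\<forall>\<beta>. (j, \<beta>) \<in> E \<longrightarrow> \<beta> = \<alpha>) \<or> (\<forall>i. (i, \<alpha>) \<in> E \<longrightarrow> i = j)"
proof -
  let ?P = "\<lambda>q. fg_path E q \<and> set q \<subseteq> fg_support E"
  obtain j0 \<alpha>0 where e0: "(j0, \<alpha>0) \<in> E" using assms(2) by auto
  then have start: "?P [Inl j0, Inr \<alpha>0]"
    unfolding fg_path_def fg_adj_def fg_support_def by force
  have "length q < Suc (card (fg_support E))" if "?P q" for q
    using that assms(1) card_mono distinct_card unfolding fg_path_def fg_support_def
    by (metis finite_Un finite_imageI less_Suc_eq_le)
  then obtain p where p: "?P p" and longest: "\<And>q. ?P q \<Longrightarrow> length q \<le> length p"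
    using ex_has_greatest_nat[of ?P, OF start] by blast
  then have "length p \<ge> 2" using start by fastforce
  then obtain u v r where "rev p = u # v # r"
    by (metis Suc_le_length_iff length_rev numeral_2_eq_2)
  then have p_eq: "p = rev r @ [v, u]" by (simp add: rev_swap)
  have vu: "fg_adj E v u" using p unfolding p_eq fg_path_def by (simp add: successively_append_iff)
  have unique: "w = v" if "fg_adj E u w" for w
    using fg_acyclic_longest_path_end[OF assms(3) _ _ _ that] p longest unfolding p_eq by blast
  show thesis
  proof (cases u)
    case (Inl j)
    then obtain \<alpha> where "v = Inr \<alpha>" "(j, \<alpha>) \<in> E" using vu unfolding fg_adj_def by auto
    moreover have "fg_adj E u (Inr \<beta>)" if "(j, \<beta>) \<in> E" for \<beta>
      using Inl that unfolding fg_adj_def by auto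
    ultimately show thesis using that unique by blast
  next
    case (Inr \<alpha>)
    then obtain j where "v = Inl j" "(j, \<alpha>) \<in> E" using vu unfolding fg_adj_def by auto
    moreover have "fg_adj E u (Inl i)" if "(i, \<alpha>) \<in> E" for i
      using Inr that unfolding fg_adj_def by auto
    ultimately show thesis using that unique by blast
  qed
qed

text \<open>Edges in S point from the variable to the factor, the remaining edges from the factor to
  the variable; every node then has in-degree at most one.\<close>
definition fg_rooted_orientation :: "('v \<times> 'f) set \<Rightarrow> ('v \<times> 'f) set \<Rightarrow> bool" where
  "fg_rooted_orientation E S \<longleftrightarrow> S \<subseteq> E \<and>
     (\<forall>j j' \<alpha>. (j, \<alpha>) \<in> S \<longrightarrow> (j', \<alpha>) \<in> S \<longrightarrow> j = j') \<and>
     (\<forall>j \<alpha> \<alpha>'. (j, \<alpha>) \<in> E - S \<longrightarrow> (j, \<alpha>') \<in> E - S \<longrightarrow> \<alpha> = \<alpha>')"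

lemma fg_rooted_orientation_insert_var_leaf:
  "fg_rooted_orientation E S \<Longrightarrow> \<forall>\<beta>. (j, \<beta>) \<notin> E \<Longrightarrow>
    fg_rooted_orientation (insert (j, \<alpha>) E) S"
  unfolding fg_rooted_orientation_def by blast

lemma fg_rooted_orientation_insert_factor_leaf:
  "fg_rooted_orientation E S \<Longrightarrow> \<forall>i. (i, \<alpha>) \<notin> E \<Longrightarrow>
    fg_rooted_orientation (insert (j, \<alpha>) E) (insert (j, \<alpha>) S)"
  unfolding fg_rooted_orientation_def by blast

lemma fg_acyclic_rooted_orientation:
  assumes "finite E" "fg_acyclic E"
  obtains S where "fg_rooted_orientation E S"
  using assms
proof (induction E arbitrary: thesis rule: finite_remove_induct)
  case empty
  then show ?case unfolding fg_rooted_orientation_def by blast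
next
  case (remove E)
  obtain j \<alpha> where e: "(j, \<alpha>) \<in> E"
    and leaf: "(\<forall>\<beta>. (j, \<beta>) \<in> E \<longrightarrow> \<beta> = \<alpha>) \<or> (\<forall>i. (i, \<alpha>) \<in> E \<longrightarrow> i = j)"
    using fg_acyclic_leaf_edge remove.hyps(1,2) remove.prems(2) by metis
  obtain S where S: "fg_rooted_orientation (E - {(j, \<alpha>)}) S"
    using remove.IH[OF e] fg_acyclic_subset remove.prems(2) by (metis Diff_subset)
  have E_eq: "E = insert (j, \<alpha>) (E - {(j, \<alpha>)})" using e by blast
  from leaf show ?case
  proof
    assume "\<forall>\<beta>. (j, \<beta>) \<in> E \<longrightarrow> \<beta> = \<alpha>"
    then have "\<forall>\<beta>. (j, \<beta>) \<notin> E - {(j, \<alpha>)}" by blast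
    then show ?case
      using fg_rooted_orientation_insert_var_leaf[OF S] remove.prems(1) E_eq by metis
  next
    assume "\<forall>i. (i, \<alpha>) \<in> E \<longrightarrow> i = j"
    then have "\<forall>i. (i, \<alpha>) \<notin> E - {(j, \<alpha>)}" by blast
    then show ?case
      using fg_rooted_orientation_insert_factor_leaf[OF S] remove.prems(1) E_eq by metis
  qed
qed

text \<open>Charge every variable to the heads of its outgoing edges: each factor is charged at most
  once, and a variable misses at most one of its edges.\<close>
lemma fg_acyclic_weighted_degree_le:
  fixes a :: "'v \<Rightarrow> real" and b :: "'f \<Rightarrow> real"
  assumes fin: "finite V" "finite F" and E: "E \<subseteq> V \<times> F" and acyclic: "fg_acyclic E"
    and a_nonneg: "\<And>j. j \<in> V \<Longrightarrow> 0 \<le> a j" and b_nonneg: "\<And>\<alpha>. \<alpha> \<in> F \<Longrightarrow> 0 \<le> b \<alpha>"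
    and a_le_b: "\<And>j \<alpha>. (j, \<alpha>) \<in> E \<Longrightarrow> a j \<le> b \<alpha>"
  shows "(\<Sum>j\<in>V. (real (card (nbF F E j)) - 1) * a j) \<le> (\<Sum>\<alpha>\<in>F. b \<alpha>)"
proof -
  have "finite E" using fin E finite_subset by blast
  then obtain S where S: "fg_rooted_orientation E S"
    using fg_acyclic_rooted_orientation acyclic by blast
  have var: "(real (card (nbF F E j)) - 1) * a j \<le> (\<Sum>\<alpha>\<in>{\<alpha>\<in>F. (j, \<alpha>) \<in> S}. a j)"
    if "j \<in> V" for j
  proof -
    define R where "R = {\<alpha>\<in>F. (j, \<alpha>) \<in> E - S}"
    have "card R \<le> 1"
      using S fin card_le_Suc0_iff_eq[of R] unfolding R_def fg_rooted_orientation_def by auto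
    have "card (nbF F E j) \<le> card ({\<alpha>\<in>F. (j, \<alpha>) \<in> S} \<union> R)"
      using fin unfolding nbF_def R_def by (intro card_mono) auto
    also have "\<dots> \<le> card {\<alpha>\<in>F. (j, \<alpha>) \<in> S} + card R" by (rule card_Un_le)
    finally show ?thesis using \<open>card R \<le> 1\<close> a_nonneg[OF that] by (simp add: mult_right_mono)
  qed
  have factor: "(\<Sum>j\<in>{j\<in>V. (j, \<alpha>) \<in> S}. a j) \<le> b \<alpha>" if "\<alpha> \<in> F" for \<alpha>
  proof (cases "\<exists>j\<in>V. (j, \<alpha>) \<in> S")
    case True
    then obtain j where "j \<in> V" "(j, \<alpha>) \<in> S" by blast
    then have "{j\<in>V. (j, \<alpha>) \<in> S} = {j}" "(j, \<alpha>) \<in> E"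
      using S unfolding fg_rooted_orientation_def by blast+
    then show ?thesis using a_le_b by simp
  next
    case False
    then have "{j\<in>V. (j, \<alpha>) \<in> S} = {}" by blast
    then show ?thesis using b_nonneg[OF that] by (metis sum.empty)
  qed
  have "(\<Sum>j\<in>V. (real (card (nbF F E j)) - 1) * a j) \<le> (\<Sum>j\<in>V. \<Sum>\<alpha>\<in>{\<alpha>\<in>F. (j, \<alpha>) \<in> S}. a j)"
    using var by (rule sum_mono)
  also have "\<dots> = (\<Sum>\<alpha>\<in>F. \<Sum>j\<in>{j\<in>V. (j, \<alpha>) \<in> S}. a j)"
    using fin by (rule sum.swap_restrict)
  also have "\<dots> \<le> (\<Sum>\<alpha>\<in>F. b \<alpha>)" using factor by (rule sum_mono)
  finally show ?thesis .
qed

lemma factor_tree_nbF_nonempty: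
  assumes tree: "factor_tree V F E" and "F \<noteq> {}" and "j \<in> V"
  shows "nbF F E j \<noteq> {}"
proof -
  obtain \<alpha> where "\<alpha> \<in> F" using \<open>F \<noteq> {}\<close> by blast
  then have "(Inl j, Inr \<alpha>) \<in> {(u, w). fg_adj E u w}\<^sup>*"
    using tree \<open>j \<in> V\<close> unfolding factor_tree_def fg_connected_def fg_nodes_def by blast
  then obtain w where "fg_adj E (Inl j) w"
    by (cases rule: converse_rtranclE) auto
  then obtain \<beta> where "(j, \<beta>) \<in> E" unfolding fg_adj_def by auto
  then show ?thesis using tree unfolding factor_tree_def nbF_def by blast
qed

section \<open>Relative entropy\<close>

text \<open>Where p x = 0 the summand is 0 whatever q x is (ln 0 = 0 and x / 0 = 0 in Isabelle), so
  the lemmas below only ask for q x > 0 where p x > 0.\<close>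
definition rel_entropy :: "'a set \<Rightarrow> ('a \<Rightarrow> real) \<Rightarrow> ('a \<Rightarrow> real) \<Rightarrow> real" where
  "rel_entropy A p q = (\<Sum>x\<in>A. p x * ln (p x / q x))"

lemma diff_le_mult_ln_div:
  fixes p r :: real
  assumes "0 < p" "0 < r"
  shows "p - r \<le> p * ln (p / r)"
proof -
  have "ln (r / p) \<le> r / p - 1" using assms by (intro ln_le_minus_one) simp
  then have "p * ln (r / p) \<le> r - p" using assms by (simp add: field_simps)
  moreover have "ln (p / r) = - ln (r / p)" using assms by (simp add: ln_div)
  ultimately show ?thesis by simp
qed

lemma log_sum_inequality:
  fixes p q :: "'a \<Rightarrow> real"
  assumes "finite A" and p_nonneg: "\<And>x. x \<in> A \<Longrightarrow> 0 \<le> p x" and q_nonneg: "\<And>x. x \<in> A \<Longrightarrow> 0 \<le> q x"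
    and support: "\<And>x. x \<in> A \<Longrightarrow> 0 < p x \<Longrightarrow> 0 < q x"
  shows "sum p A * ln (sum p A / sum q A) \<le> rel_entropy A p q"
proof (cases "sum p A = 0")
  case True
  then show ?thesis using \<open>finite A\<close> p_nonneg
    unfolding rel_entropy_def by (simp add: sum_nonneg_eq_0_iff)
next
  case False
  then obtain x0 where x0: "x0 \<in> A" "0 < p x0"
    using p_nonneg by (metis less_eq_real_def sum.neutral)
  have P: "0 < sum p A" using False p_nonneg by (simp add: order_less_le sum_nonneg)
  have "q x0 \<le> sum q A" using x0(1) q_nonneg \<open>finite A\<close> by (intro member_le_sum) auto
  then have Q: "0 < sum q A" using support[OF x0] by simp
  define c where "c = sum p A / sum q A"
  have c: "0 < c" unfolding c_def using P Q by simp
  have "p x - q x * c \<le> p x * ln (p x / q x) - p x * ln c" if "x \<in> A" for x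
  proof (cases "p x = 0")
    case False
    then have "0 < p x" "0 < q x" using that p_nonneg support by (auto simp: order_less_le)
    then show ?thesis using diff_le_mult_ln_div[of "p x" "q x * c"] c
      by (simp add: ln_div ln_mult algebra_simps)
  qed (use that q_nonneg c in simp)
  then have "(\<Sum>x\<in>A. p x - q x * c) \<le> (\<Sum>x\<in>A. p x * ln (p x / q x) - p x * ln c)"
    by (rule sum_mono)
  moreover have "(\<Sum>x\<in>A. p x - q x * c) = 0"
    using Q unfolding c_def
    by (simp add: sum_subtractf sum_divide_distrib[symmetric] sum_distrib_right[symmetric])
  ultimately show ?thesis
    unfolding rel_entropy_def c_def by (simp add: sum_subtractf sum_distrib_right[symmetric])
qed

lemma rel_entropy_nonneg:
  assumes "finite A" "\<And>x. x \<in> A \<Longrightarrow> 0 \<le> p x" "\<And>x. x \<in> A \<Longrightarrow> 0 \<le> q x"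
    and "\<And>x. x \<in> A \<Longrightarrow> 0 < p x \<Longrightarrow> 0 < q x" and "sum p A = sum q A"
  shows "0 \<le> rel_entropy A p q"
proof -
  have "sum p A * ln (sum p A / sum q A) \<le> rel_entropy A p q"
    using assms(1-4) by (rule log_sum_inequality)
  then show ?thesis using assms(5) by (cases "sum q A = 0") simp_all
qed

lemma rel_entropy_self: "rel_entropy A p p = 0"
  unfolding rel_entropy_def by (intro sum.neutral) simp

lemma rel_entropy_marginal_le:
  assumes "finite A" "finite B" "g ` A \<subseteq> B"
    and "\<And>x. x \<in> A \<Longrightarrow> 0 \<le> p x" "\<And>x. x \<in> A \<Longrightarrow> 0 \<le> q x"
    and "\<And>x. x \<in> A \<Longrightarrow> 0 < p x \<Longrightarrow> 0 < q x"
  shows "rel_entropy B (\<lambda>y. \<Sum>x\<in>{x\<in>A. g x = y}. p x) (\<lambda>y. \<Sum>x\<in>{x\<in>A. g x = y}. q x)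
    \<le> rel_entropy A p q"
proof -
  have "rel_entropy B (\<lambda>y. \<Sum>x\<in>{x\<in>A. g x = y}. p x) (\<lambda>y. \<Sum>x\<in>{x\<in>A. g x = y}. q x)
      \<le> (\<Sum>y\<in>B. rel_entropy {x\<in>A. g x = y} p q)"
    unfolding rel_entropy_def[of B] using assms
    by (intro sum_mono log_sum_inequality) auto
  also have "\<dots> = rel_entropy A p q"
    unfolding rel_entropy_def using assms(1-3) by (rule sum.group)
  finally show ?thesis .
qed

lemma xlnx_split:
  assumes "0 \<le> p" "0 < p \<Longrightarrow> 0 < q"
  shows "xlnx p = p * ln (p / q) + p * ln q"
  using assms by (cases "p = 0") (auto simp: xlnx_def ln_div algebra_simps)

section \<open>Beliefs at a fixed point of belief propagation\<close>

lemma feasibleD: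
  assumes "feasible V F E d \<Gamma> \<mu> Bv Bf"
  shows "j \<in> V \<Longrightarrow> a < d j \<Longrightarrow> 0 \<le> Bv j a"
    and "\<alpha> \<in> F \<Longrightarrow> x \<in> configs V E d \<alpha> \<Longrightarrow> 0 \<le> Bf \<alpha> x"
    and "j \<in> \<Gamma> \<Longrightarrow> a < d j \<Longrightarrow> Bv j a = \<mu> j a"
    and "j \<in> V \<Longrightarrow> \<alpha> \<in> nbF F E j \<Longrightarrow> a < d j \<Longrightarrow>
      (\<Sum>x\<in>configs_fix V E d \<alpha> j a. Bf \<alpha> x) = Bv j a"
    and "\<alpha> \<in> F \<Longrightarrow> (\<Sum>x\<in>configs V E d \<alpha>. Bf \<alpha> x) = 1"
  using assms unfolding feasible_def by blast+

text \<open>The hypotheses of the theorem, with the normalising constants cm and cn of the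
  fixed-point equations made explicit as functions of the edge. Boundary variables need not be
  leaves, nonnegativity of n follows from the fixed-point equations, and the tree enters only
  through acyclicity and the absence of isolated variables.\<close>
locale bp_fixed_point =
  fixes V :: "'v set" and F :: "'f set" and E :: "('v \<times> 'f) set"
    and d :: "'v \<Rightarrow> nat" and \<epsilon> :: real
    and C :: "'f \<Rightarrow> ('v \<Rightarrow> nat) \<Rightarrow> real"
    and \<Gamma> :: "'v set" and \<mu> :: "'v \<Rightarrow> nat \<Rightarrow> real"
    and m :: "'f \<Rightarrow> 'v \<Rightarrow> nat \<Rightarrow> real" and n :: "'v \<Rightarrow> 'f \<Rightarrow> nat \<Rightarrow> real"
    and cm :: "'v \<Rightarrow> 'f \<Rightarrow> real" and cn :: "'v \<Rightarrow> 'f \<Rightarrow> real"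
  assumes finite_V: "finite V" and finite_F: "finite F" and E_subset: "E \<subseteq> V \<times> F"
    and acyclic: "fg_acyclic E"
    and nbF_nonempty: "\<And>j. j \<in> V \<Longrightarrow> nbF F E j \<noteq> {}"
    and d_pos: "\<And>j. j \<in> V \<Longrightarrow> 0 < d j"
    and eps_pos: "0 < \<epsilon>"
    and mu_nonneg: "\<And>j a. j \<in> \<Gamma> \<Longrightarrow> a < d j \<Longrightarrow> 0 \<le> \<mu> j a"
    and mu_sum: "\<And>j. j \<in> \<Gamma> \<Longrightarrow> (\<Sum>a<d j. \<mu> j a) = 1"
    and m_pos: "\<And>j \<alpha> a. (j, \<alpha>) \<in> E \<Longrightarrow> a < d j \<Longrightarrow> 0 < m \<alpha> j a"
    and cm_pos: "\<And>j \<alpha>. (j, \<alpha>) \<in> E \<Longrightarrow> 0 < cm j \<alpha>"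
    and m_fixed: "\<And>j \<alpha> a. (j, \<alpha>) \<in> E \<Longrightarrow> a < d j \<Longrightarrow> m \<alpha> j a = cm j \<alpha> *
      (\<Sum>x\<in>configs_fix V E d \<alpha> j a. exp (- C \<alpha> x / \<epsilon>) * (\<Prod>i\<in>nbV V E \<alpha> - {j}. n i \<alpha> (x i)))"
    and cn_pos: "\<And>j \<alpha>. (j, \<alpha>) \<in> E \<Longrightarrow> 0 < cn j \<alpha>"
    and n_fixed: "\<And>j \<alpha> a. (j, \<alpha>) \<in> E \<Longrightarrow> j \<notin> \<Gamma> \<Longrightarrow> a < d j \<Longrightarrow>
      n j \<alpha> a = cn j \<alpha> * (\<Prod>\<beta>\<in>nbF F E j - {\<alpha>}. m \<beta> j a)"
    and n_fixed_boundary: "\<And>j \<alpha> a. (j, \<alpha>) \<in> E \<Longrightarrow> j \<in> \<Gamma> \<Longrightarrow> a < d j \<Longrightarrow>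
      n j \<alpha> a = cn j \<alpha> * (\<mu> j a * inverse (m \<alpha> j a))"
begin

abbreviation "b_var \<equiv> bp_var_belief F E d \<Gamma> \<mu> m"
abbreviation "b_factor \<equiv> bp_factor_belief V E d \<epsilon> C n"

definition factor_weight :: "'f \<Rightarrow> ('v \<Rightarrow> nat) \<Rightarrow> real" where
  "factor_weight \<alpha> x = exp (- C \<alpha> x / \<epsilon>) * (\<Prod>j\<in>nbV V E \<alpha>. n j \<alpha> (x j))"

definition factor_partition :: "'f \<Rightarrow> real" where
  "factor_partition \<alpha> = (\<Sum>x\<in>configs V E d \<alpha>. factor_weight \<alpha> x)"

definition var_weight :: "'v \<Rightarrow> nat \<Rightarrow> real" where
  "var_weight j a = (if j \<in> \<Gamma> then \<mu> j a else (\<Prod>\<alpha>\<in>nbF F E j. m \<alpha> j a))"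

definition var_partition :: "'v \<Rightarrow> real" where
  "var_partition j = (\<Sum>a<d j. var_weight j a)"

lemma b_factor_eq: "b_factor \<alpha> x = factor_weight \<alpha> x / factor_partition \<alpha>"
  by (simp add: bp_factor_belief_def factor_weight_def factor_partition_def)

lemma nbV_iff: "j \<in> nbV V E \<alpha> \<longleftrightarrow> (j, \<alpha>) \<in> E"
  unfolding nbV_def using E_subset by auto

lemma nbF_iff: "\<alpha> \<in> nbF F E j \<longleftrightarrow> (j, \<alpha>) \<in> E"
  unfolding nbF_def using E_subset by auto

lemma finite_nbV: "finite (nbV V E \<alpha>)"
  unfolding nbV_def using finite_V by simp

lemma finite_nbF: "finite (nbF F E j)"
  unfolding nbF_def using finite_F by simp

lemma finite_configs: "finite (configs V E d \<alpha>)"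
  unfolding configs_def using finite_nbV by (intro finite_PiE) auto

lemma finite_configs_fix: "finite (configs_fix V E d \<alpha> j a)"
  unfolding configs_fix_def using finite_configs by simp

lemma configs_less: "x \<in> configs V E d \<alpha> \<Longrightarrow> (j, \<alpha>) \<in> E \<Longrightarrow> x j < d j"
  unfolding configs_def using nbV_iff by (auto simp: PiE_iff)

lemma sum_configs_by_value:
  "(j, \<alpha>) \<in> E \<Longrightarrow>
    (\<Sum>x\<in>configs V E d \<alpha>. f x) = (\<Sum>a<d j. \<Sum>x\<in>configs_fix V E d \<alpha> j a. f x)"
  unfolding configs_fix_def using configs_less finite_configs by (intro sum.group[symmetric]) auto

lemma n_pos:
  assumes e: "(j, \<alpha>) \<in> E" and "j \<notin> \<Gamma>" and a: "a < d j"
  shows "0 < n j \<alpha> a"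
proof -
  have "0 < (\<Prod>\<beta>\<in>nbF F E j - {\<alpha>}. m \<beta> j a)" using m_pos a nbF_iff by (intro prod_pos) auto
  then show ?thesis using n_fixed[OF assms] cn_pos[OF e] by simp
qed

lemma n_nonneg: "(j, \<alpha>) \<in> E \<Longrightarrow> a < d j \<Longrightarrow> 0 \<le> n j \<alpha> a"
  using n_pos[of j \<alpha> a] n_fixed_boundary[of j \<alpha> a] cn_pos[of j \<alpha>] m_pos[of j \<alpha> a] mu_nonneg[of j a]
  by (cases "j \<in> \<Gamma>") (auto simp: less_imp_le)

lemma factor_weight_nonneg: "x \<in> configs V E d \<alpha> \<Longrightarrow> 0 \<le> factor_weight \<alpha> x"
  unfolding factor_weight_def using n_nonneg configs_less nbV_iff
  by (intro mult_nonneg_nonneg prod_nonneg) auto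

lemma var_weight_pos: "j \<notin> \<Gamma> \<Longrightarrow> a < d j \<Longrightarrow> 0 < var_weight j a"
  unfolding var_weight_def using m_pos nbF_iff by (auto intro!: prod_pos)

lemma var_partition_boundary: "j \<in> \<Gamma> \<Longrightarrow> var_partition j = 1"
  unfolding var_partition_def var_weight_def using mu_sum by simp

lemma var_partition_pos:
  assumes "j \<in> V" shows "0 < var_partition j"
proof (cases "j \<in> \<Gamma>")
  case False
  have "{..<d j} \<noteq> {}" using d_pos[OF assms] by auto
  then show ?thesis
    unfolding var_partition_def using var_weight_pos[OF False] by (intro sum_pos) auto
qed (simp add: var_partition_boundary)

lemma b_var_eq: "b_var j a = var_weight j a / var_partition j"
  using var_partition_boundary
  by (simp add: bp_var_belief_def var_weight_def var_partition_def)

lemma n_mult_m: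
  assumes e: "(j, \<alpha>) \<in> E" and a: "a < d j"
  shows "n j \<alpha> a * m \<alpha> j a = cn j \<alpha> * var_weight j a"
proof (cases "j \<in> \<Gamma>")
  case True
  then show ?thesis using n_fixed_boundary[OF e True a] m_pos[OF e a] by (simp add: var_weight_def)
next
  case False
  have "\<alpha> \<in> nbF F E j" using e nbF_iff by blast
  then have "(\<Prod>\<beta>\<in>nbF F E j. m \<beta> j a) = m \<alpha> j a * (\<Prod>\<beta>\<in>nbF F E j - {\<alpha>}. m \<beta> j a)"
    by (rule prod.remove[OF finite_nbF])
  then show ?thesis using n_fixed[OF e False a] False by (simp add: var_weight_def mult_ac)
qed

lemma factor_weight_marginal:
  assumes e: "(j, \<alpha>) \<in> E" and a: "a < d j"
  shows "(\<Sum>x\<in>configs_fix V E d \<alpha> j a. factor_weight \<alpha> x) = cn j \<alpha> / cm j \<alpha> * var_weight j a"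
proof -
  have "factor_weight \<alpha> x =
      n j \<alpha> a * (exp (- C \<alpha> x / \<epsilon>) * (\<Prod>i\<in>nbV V E \<alpha> - {j}. n i \<alpha> (x i)))"
    if "x \<in> configs_fix V E d \<alpha> j a" for x
    using that prod.remove[OF finite_nbV, of j \<alpha> "\<lambda>i. n i \<alpha> (x i)"] e nbV_iff
    unfolding factor_weight_def configs_fix_def by auto
  then have "(\<Sum>x\<in>configs_fix V E d \<alpha> j a. factor_weight \<alpha> x) = n j \<alpha> a *
      (\<Sum>x\<in>configs_fix V E d \<alpha> j a. exp (- C \<alpha> x / \<epsilon>) * (\<Prod>i\<in>nbV V E \<alpha> - {j}. n i \<alpha> (x i)))"
    by (simp add: sum_distrib_left)
  also have "\<dots> = n j \<alpha> a * m \<alpha> j a / cm j \<alpha>" using m_fixed[OF e a] cm_pos[OF e] by simp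
  finally show ?thesis using n_mult_m[OF e a] by simp
qed

lemma factor_partition_eq:
  assumes e: "(j, \<alpha>) \<in> E"
  shows "factor_partition \<alpha> = cn j \<alpha> / cm j \<alpha> * var_partition j"
  unfolding factor_partition_def var_partition_def sum_configs_by_value[OF e]
  by (simp add: factor_weight_marginal[OF e] sum_distrib_left)

lemma factor_partition_pos: "\<alpha> \<in> F \<Longrightarrow> 0 < factor_partition \<alpha>"
proof (cases "nbV V E \<alpha> = {}")
  case True
  then show ?thesis unfolding factor_partition_def configs_def factor_weight_def by simp
next
  case False
  then obtain j where e: "(j, \<alpha>) \<in> E" using nbV_iff by blast
  then show ?thesis
    using factor_partition_eq cn_pos cm_pos var_partition_pos E_subset by auto
qed

lemma b_factor_marginal:
  assumes e: "(j, \<alpha>) \<in> E" and a: "a < d j"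
  shows "(\<Sum>x\<in>configs_fix V E d \<alpha> j a. b_factor \<alpha> x) = b_var j a"
proof -
  have "(\<Sum>x\<in>configs_fix V E d \<alpha> j a. b_factor \<alpha> x) =
      (\<Sum>x\<in>configs_fix V E d \<alpha> j a. factor_weight \<alpha> x) / factor_partition \<alpha>"
    by (simp add: b_factor_eq sum_divide_distrib)
  also have "\<dots> = var_weight j a / var_partition j"
    using factor_weight_marginal[OF e a] factor_partition_eq[OF e] cn_pos[OF e] cm_pos[OF e] by simp
  finally show ?thesis by (simp add: b_var_eq)
qed

lemma b_var_nonneg: "j \<in> V \<Longrightarrow> a < d j \<Longrightarrow> 0 \<le> b_var j a"
  using mu_nonneg var_weight_pos var_partition_pos
  by (cases "j \<in> \<Gamma>") (auto simp: b_var_eq var_weight_def less_imp_le)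

lemma b_var_pos: "j \<in> V \<Longrightarrow> j \<notin> \<Gamma> \<Longrightarrow> a < d j \<Longrightarrow> 0 < b_var j a"
  using var_weight_pos var_partition_pos by (simp add: b_var_eq)

lemma feasible_bp: "feasible V F E d \<Gamma> \<mu> b_var b_factor"
  unfolding feasible_def
proof (intro conjI ballI allI impI)
  show "0 \<le> b_factor \<alpha> x" if "\<alpha> \<in> F" "x \<in> configs V E d \<alpha>" for \<alpha> x
    unfolding b_factor_eq using that
    by (intro divide_nonneg_pos factor_weight_nonneg factor_partition_pos)
  show "(\<Sum>x\<in>configs V E d \<alpha>. b_factor \<alpha> x) = 1" if "\<alpha> \<in> F" for \<alpha>
    using factor_partition_pos[OF that]
    by (simp add: b_factor_eq factor_partition_def sum_divide_distrib[symmetric])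
  show "0 \<le> b_var j a" if "j \<in> V" "a < d j" for j a using that by (rule b_var_nonneg)
  show "b_var j a = \<mu> j a" if "j \<in> \<Gamma>" for j a using that by (simp add: bp_var_belief_def)
  show "(\<Sum>x\<in>configs_fix V E d \<alpha> j a. b_factor \<alpha> x) = b_var j a"
    if "\<alpha> \<in> nbF F E j" "a < d j" for j \<alpha> a
    using that by (simp add: b_factor_marginal nbF_iff)
qed

lemma feasible_edge_marginal:
  assumes fe: "feasible V F E d \<Gamma> \<mu> Bv Bf" and e: "(j, \<alpha>) \<in> E" and "a < d j"
  shows "(\<Sum>x\<in>configs_fix V E d \<alpha> j a. Bf \<alpha> x) = Bv j a"
proof -
  have "j \<in> V" "\<alpha> \<in> nbF F E j" using e E_subset nbF_iff by auto
  then show ?thesis using feasibleD(4)[OF fe] \<open>a < d j\<close> by blast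
qed

lemma feasible_expectation_marginal:
  assumes fe: "feasible V F E d \<Gamma> \<mu> Bv Bf" and e: "(j, \<alpha>) \<in> E"
  shows "(\<Sum>x\<in>configs V E d \<alpha>. Bf \<alpha> x * f (x j)) = (\<Sum>a<d j. Bv j a * f a)"
proof -
  have "(\<Sum>x\<in>configs_fix V E d \<alpha> j a. Bf \<alpha> x * f (x j)) = Bv j a * f a" if "a < d j" for a
    using feasible_edge_marginal[OF fe e that]
    by (simp add: configs_fix_def sum_distrib_right[symmetric])
  then show ?thesis by (simp add: sum_configs_by_value[OF e])
qed

lemma feasible_var_sum:
  assumes fe: "feasible V F E d \<Gamma> \<mu> Bv Bf" and j: "j \<in> V"
  shows "(\<Sum>a<d j. Bv j a) = 1"
proof -
  obtain \<alpha> where e: "(j, \<alpha>) \<in> E" using nbF_nonempty[OF j] nbF_iff by blast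
  then have "(\<Sum>a<d j. Bv j a) = (\<Sum>x\<in>configs V E d \<alpha>. Bf \<alpha> x)"
    using feasible_expectation_marginal[OF fe e, of "\<lambda>_. 1"] by simp
  also have "\<dots> = 1" using feasibleD(5)[OF fe] e E_subset by blast
  finally show ?thesis .
qed

lemma feasible_factor_le_var:
  assumes fe: "feasible V F E d \<Gamma> \<mu> Bv Bf" and e: "(j, \<alpha>) \<in> E" and x: "x \<in> configs V E d \<alpha>"
  shows "Bf \<alpha> x \<le> Bv j (x j)"
proof -
  have "Bf \<alpha> x \<le> (\<Sum>y\<in>configs_fix V E d \<alpha> j (x j). Bf \<alpha> y)"
    using x e E_subset feasibleD(2)[OF fe]
    by (intro member_le_sum finite_configs_fix) (auto simp: configs_fix_def)
  then show ?thesis using feasible_edge_marginal[OF fe e configs_less[OF x e]] by simp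
qed

lemma n_pos_feasible:
  assumes fe: "feasible V F E d \<Gamma> \<mu> Bv Bf" and e: "(j, \<alpha>) \<in> E" and a: "a < d j"
    and pos: "0 < Bv j a"
  shows "0 < n j \<alpha> a"
proof (cases "j \<in> \<Gamma>")
  case True
  then show ?thesis
    using n_fixed_boundary[OF e True a] feasibleD(3)[OF fe True a] pos cn_pos[OF e] m_pos[OF e a]
    by simp
qed (use n_pos[OF e _ a] in blast)

lemma feasible_factor_support:
  assumes fe: "feasible V F E d \<Gamma> \<mu> Bv Bf" and x: "x \<in> configs V E d \<alpha>"
    and pos: "0 < Bf \<alpha> x"
  shows "0 < factor_weight \<alpha> x"
proof -
  have "0 < n j \<alpha> (x j)" if "j \<in> nbV V E \<alpha>" for j
  proof -
    have e: "(j, \<alpha>) \<in> E" using that nbV_iff by blast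
    then show ?thesis using n_pos_feasible[OF fe e configs_less[OF x e]]
      feasible_factor_le_var[OF fe e x] pos by simp
  qed
  then show ?thesis unfolding factor_weight_def by (simp add: prod_pos)
qed

lemma feasible_var_support:
  assumes fe: "feasible V F E d \<Gamma> \<mu> Bv Bf" and j: "j \<in> V" and a: "a < d j"
    and pos: "0 < Bv j a"
  shows "0 < b_var j a"
  using feasibleD(3)[OF fe _ a] pos b_var_pos[OF j _ a]
  by (cases "j \<in> \<Gamma>") (simp_all add: bp_var_belief_def)

lemma var_divergence_nonneg:
  "feasible V F E d \<Gamma> \<mu> Bv Bf \<Longrightarrow> j \<in> V \<Longrightarrow> 0 \<le> rel_entropy {..<d j} (Bv j) (b_var j)"
  using feasibleD(1) b_var_nonneg feasible_var_support feasible_var_sum feasible_bp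
  by (intro rel_entropy_nonneg) auto

lemma factor_divergence_nonneg:
  assumes fe: "feasible V F E d \<Gamma> \<mu> Bv Bf" and \<alpha>: "\<alpha> \<in> F"
  shows "0 \<le> rel_entropy (configs V E d \<alpha>) (Bf \<alpha>) (b_factor \<alpha>)"
proof (rule rel_entropy_nonneg[OF finite_configs])
  show "0 \<le> Bf \<alpha> x" "0 \<le> b_factor \<alpha> x" if "x \<in> configs V E d \<alpha>" for x
    using feasibleD(2)[OF fe \<alpha> that] feasibleD(2)[OF feasible_bp \<alpha> that] by auto
  show "0 < b_factor \<alpha> x" if "x \<in> configs V E d \<alpha>" "0 < Bf \<alpha> x" for x
    using feasible_factor_support[OF fe that] factor_partition_pos[OF \<alpha>] by (simp add: b_factor_eq)
  show "sum (Bf \<alpha>) (configs V E d \<alpha>) = sum (b_factor \<alpha>) (configs V E d \<alpha>)"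
    using feasibleD(5)[OF fe \<alpha>] feasibleD(5)[OF feasible_bp \<alpha>] by simp
qed

lemma var_divergence_le_factor:
  assumes fe: "feasible V F E d \<Gamma> \<mu> Bv Bf" and e: "(j, \<alpha>) \<in> E"
  shows "rel_entropy {..<d j} (Bv j) (b_var j) \<le> rel_entropy (configs V E d \<alpha>) (Bf \<alpha>) (b_factor \<alpha>)"
proof -
  have \<alpha>: "\<alpha> \<in> F" using e E_subset by blast
  have "rel_entropy {..<d j} (Bv j) (b_var j) =
      rel_entropy {..<d j} (\<lambda>a. \<Sum>x\<in>{x\<in>configs V E d \<alpha>. x j = a}. Bf \<alpha> x)
        (\<lambda>a. \<Sum>x\<in>{x\<in>configs V E d \<alpha>. x j = a}. b_factor \<alpha> x)"
    unfolding rel_entropy_def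
    using feasible_edge_marginal[OF fe e] feasible_edge_marginal[OF feasible_bp e]
    by (intro sum.cong) (auto simp: configs_fix_def)
  also have "\<dots> \<le> rel_entropy (configs V E d \<alpha>) (Bf \<alpha>) (b_factor \<alpha>)"
    using feasibleD(2)[OF fe \<alpha>] feasibleD(2)[OF feasible_bp \<alpha>] configs_less[OF _ e]
      feasible_factor_support[OF fe] factor_partition_pos[OF \<alpha>]
    by (intro rel_entropy_marginal_le finite_configs) (auto simp: b_factor_eq)
  finally show ?thesis .
qed

lemma divergence_balance:
  assumes fe: "feasible V F E d \<Gamma> \<mu> Bv Bf"
  shows "(\<Sum>j\<in>V. (real (card (nbF F E j)) - 1) * rel_entropy {..<d j} (Bv j) (b_var j))
    \<le> (\<Sum>\<alpha>\<in>F. rel_entropy (configs V E d \<alpha>) (Bf \<alpha>) (b_factor \<alpha>))"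
  using finite_V finite_F E_subset acyclic var_divergence_nonneg[OF fe]
    factor_divergence_nonneg[OF fe] var_divergence_le_factor[OF fe]
  by (rule fg_acyclic_weighted_degree_le)

section \<open>The Bethe free energy as a sum of divergences\<close>

lemma ln_b_factor:
  assumes "0 < factor_weight \<alpha> x" "\<alpha> \<in> F"
  shows "ln (b_factor \<alpha> x) =
    (\<Sum>j\<in>nbV V E \<alpha>. ln (n j \<alpha> (x j))) - C \<alpha> x / \<epsilon> - ln (factor_partition \<alpha>)"
proof -
  have prod: "0 < (\<Prod>j\<in>nbV V E \<alpha>. n j \<alpha> (x j))"
    using assms(1) by (simp add: factor_weight_def zero_less_mult_iff)
  then have "ln (\<Prod>j\<in>nbV V E \<alpha>. n j \<alpha> (x j)) = (\<Sum>j\<in>nbV V E \<alpha>. ln (n j \<alpha> (x j)))"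
    by (intro ln_prod finite_nbV) (metis finite_nbV less_irrefl prod_zero_iff)
  then show ?thesis using prod factor_partition_pos[OF assms(2)]
    by (simp add: b_factor_eq factor_weight_def ln_div ln_mult)
qed

lemma factor_energy_pointwise:
  assumes fe: "feasible V F E d \<Gamma> \<mu> Bv Bf" and \<alpha>: "\<alpha> \<in> F" and x: "x \<in> configs V E d \<alpha>"
  shows "Bf \<alpha> x * C \<alpha> x + \<epsilon> * xlnx (Bf \<alpha> x) = \<epsilon> * (Bf \<alpha> x * ln (Bf \<alpha> x / b_factor \<alpha> x)
    + Bf \<alpha> x * ((\<Sum>j\<in>nbV V E \<alpha>. ln (n j \<alpha> (x j))) - ln (factor_partition \<alpha>)))"
proof (cases "Bf \<alpha> x = 0")
  case False
  then have pos: "0 < Bf \<alpha> x" using feasibleD(2)[OF fe \<alpha> x] by simp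
  have w: "0 < factor_weight \<alpha> x" by (rule feasible_factor_support[OF fe x pos])
  then have "0 < b_factor \<alpha> x" using factor_partition_pos[OF \<alpha>] by (simp add: b_factor_eq)
  then have "xlnx (Bf \<alpha> x) = Bf \<alpha> x * ln (Bf \<alpha> x / b_factor \<alpha> x) + Bf \<alpha> x * ln (b_factor \<alpha> x)"
    using pos by (intro xlnx_split) auto
  also have "\<dots> = Bf \<alpha> x * ln (Bf \<alpha> x / b_factor \<alpha> x) + Bf \<alpha> x *
      ((\<Sum>j\<in>nbV V E \<alpha>. ln (n j \<alpha> (x j))) - ln (factor_partition \<alpha>)) - Bf \<alpha> x * C \<alpha> x / \<epsilon>"
    unfolding ln_b_factor[OF w \<alpha>] by (simp add: algebra_simps)
  finally show ?thesis using eps_pos by (simp add: field_simps)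
qed (simp add: xlnx_def)

lemma factor_energy_eq:
  assumes fe: "feasible V F E d \<Gamma> \<mu> Bv Bf" and \<alpha>: "\<alpha> \<in> F"
  shows "(\<Sum>x\<in>configs V E d \<alpha>. Bf \<alpha> x * C \<alpha> x + \<epsilon> * xlnx (Bf \<alpha> x)) =
    \<epsilon> * (rel_entropy (configs V E d \<alpha>) (Bf \<alpha>) (b_factor \<alpha>)
      + (\<Sum>j\<in>nbV V E \<alpha>. \<Sum>a<d j. Bv j a * ln (n j \<alpha> a)) - ln (factor_partition \<alpha>))"
proof -
  have "(\<Sum>x\<in>configs V E d \<alpha>. Bf \<alpha> x * (\<Sum>j\<in>nbV V E \<alpha>. ln (n j \<alpha> (x j))))
      = (\<Sum>j\<in>nbV V E \<alpha>. \<Sum>x\<in>configs V E d \<alpha>. Bf \<alpha> x * ln (n j \<alpha> (x j)))"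
    by (simp add: sum_distrib_left sum.swap[of _ "configs V E d \<alpha>"])
  also have "\<dots> = (\<Sum>j\<in>nbV V E \<alpha>. \<Sum>a<d j. Bv j a * ln (n j \<alpha> a))"
    using feasible_expectation_marginal[OF fe] nbV_iff by (intro sum.cong) auto
  finally have marginals: "(\<Sum>x\<in>configs V E d \<alpha>. Bf \<alpha> x * (\<Sum>j\<in>nbV V E \<alpha>. ln (n j \<alpha> (x j))))
      = (\<Sum>j\<in>nbV V E \<alpha>. \<Sum>a<d j. Bv j a * ln (n j \<alpha> a))" .
  have "(\<Sum>x\<in>configs V E d \<alpha>. Bf \<alpha> x * C \<alpha> x + \<epsilon> * xlnx (Bf \<alpha> x)) =
      (\<Sum>x\<in>configs V E d \<alpha>. \<epsilon> * (Bf \<alpha> x * ln (Bf \<alpha> x / b_factor \<alpha> x))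
        + \<epsilon> * (Bf \<alpha> x * (\<Sum>j\<in>nbV V E \<alpha>. ln (n j \<alpha> (x j))))
        - \<epsilon> * (Bf \<alpha> x * ln (factor_partition \<alpha>)))"
    using factor_energy_pointwise[OF fe \<alpha>] by (intro sum.cong) (simp_all add: algebra_simps)
  also have "\<dots> = \<epsilon> * (rel_entropy (configs V E d \<alpha>) (Bf \<alpha>) (b_factor \<alpha>)
        + (\<Sum>x\<in>configs V E d \<alpha>. Bf \<alpha> x * (\<Sum>j\<in>nbV V E \<alpha>. ln (n j \<alpha> (x j))))
        - (\<Sum>x\<in>configs V E d \<alpha>. Bf \<alpha> x) * ln (factor_partition \<alpha>))"
    unfolding rel_entropy_def
    by (simp only: sum.distrib sum_subtractf sum_distrib_left[symmetric]
        sum_distrib_right[symmetric] distrib_left right_diff_distrib)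
  finally show ?thesis unfolding marginals feasibleD(5)[OF fe \<alpha>] by simp
qed

lemma var_entropy_eq:
  assumes fe: "feasible V F E d \<Gamma> \<mu> Bv Bf" and j: "j \<in> V"
  shows "(\<Sum>a<d j. xlnx (Bv j a)) =
    rel_entropy {..<d j} (Bv j) (b_var j) + (\<Sum>a<d j. Bv j a * ln (b_var j a))"
  unfolding rel_entropy_def sum.distrib[symmetric]
  using feasibleD(1)[OF fe j] feasible_var_support[OF fe j] by (intro sum.cong xlnx_split) auto

definition residual_coeff :: "'v \<Rightarrow> nat \<Rightarrow> real" where
  "residual_coeff j a =
    (\<Sum>\<alpha>\<in>nbF F E j. ln (n j \<alpha> a)) - (real (card (nbF F E j)) - 1) * ln (b_var j a)"

definition bethe_residual :: "('v \<Rightarrow> nat \<Rightarrow> real) \<Rightarrow> real" where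
  "bethe_residual Bv =
    (\<Sum>j\<in>V. \<Sum>a<d j. Bv j a * residual_coeff j a) - (\<Sum>\<alpha>\<in>F. ln (factor_partition \<alpha>))"

lemma sum_residual_coeff:
  "(\<Sum>a<d j. Bv j a * residual_coeff j a) =
    (\<Sum>\<alpha>\<in>nbF F E j. \<Sum>a<d j. Bv j a * ln (n j \<alpha> a))
      - (real (card (nbF F E j)) - 1) * (\<Sum>a<d j. Bv j a * ln (b_var j a))"
proof -
  have "(\<Sum>a<d j. Bv j a * residual_coeff j a) =
      (\<Sum>a<d j. \<Sum>\<alpha>\<in>nbF F E j. Bv j a * ln (n j \<alpha> a))
        - (real (card (nbF F E j)) - 1) * (\<Sum>a<d j. Bv j a * ln (b_var j a))"
    unfolding residual_coeff_def
    by (simp add: right_diff_distrib sum_subtractf sum_distrib_left mult.left_commute)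
  then show ?thesis by (simp add: sum.swap[of _ "{..<d j}"])
qed

lemma bethe_eq_divergences:
  assumes fe: "feasible V F E d \<Gamma> \<mu> Bv Bf"
  shows "bethe V F E d \<epsilon> C Bv Bf = \<epsilon> *
    ((\<Sum>\<alpha>\<in>F. rel_entropy (configs V E d \<alpha>) (Bf \<alpha>) (b_factor \<alpha>))
      - (\<Sum>j\<in>V. (real (card (nbF F E j)) - 1) * rel_entropy {..<d j} (Bv j) (b_var j))
      + bethe_residual Bv)"
proof -
  let ?N = "\<lambda>j. real (card (nbF F E j)) - 1"
  let ?M = "\<lambda>j \<alpha>. \<Sum>a<d j. Bv j a * ln (n j \<alpha> a)"
  have swap: "(\<Sum>\<alpha>\<in>F. \<Sum>j\<in>nbV V E \<alpha>. ?M j \<alpha>) = (\<Sum>j\<in>V. \<Sum>\<alpha>\<in>nbF F E j. ?M j \<alpha>)"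
    unfolding nbV_def nbF_def using finite_F finite_V by (rule sum.swap_restrict)
  have "(\<Sum>\<alpha>\<in>F. \<Sum>x\<in>configs V E d \<alpha>. Bf \<alpha> x * C \<alpha> x)
      + \<epsilon> * (\<Sum>\<alpha>\<in>F. \<Sum>x\<in>configs V E d \<alpha>. xlnx (Bf \<alpha> x))
    = (\<Sum>\<alpha>\<in>F. \<Sum>x\<in>configs V E d \<alpha>. Bf \<alpha> x * C \<alpha> x + \<epsilon> * xlnx (Bf \<alpha> x))"
    by (simp add: sum.distrib sum_distrib_left)
  also have "\<dots> = \<epsilon> * ((\<Sum>\<alpha>\<in>F. rel_entropy (configs V E d \<alpha>) (Bf \<alpha>) (b_factor \<alpha>))
      + (\<Sum>j\<in>V. \<Sum>\<alpha>\<in>nbF F E j. ?M j \<alpha>) - (\<Sum>\<alpha>\<in>F. ln (factor_partition \<alpha>)))"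
    using factor_energy_eq[OF fe] swap
    by (simp add: sum_distrib_left[symmetric] sum.distrib sum_subtractf)
  finally have factors: "(\<Sum>\<alpha>\<in>F. \<Sum>x\<in>configs V E d \<alpha>. Bf \<alpha> x * C \<alpha> x)
      + \<epsilon> * (\<Sum>\<alpha>\<in>F. \<Sum>x\<in>configs V E d \<alpha>. xlnx (Bf \<alpha> x))
    = \<epsilon> * ((\<Sum>\<alpha>\<in>F. rel_entropy (configs V E d \<alpha>) (Bf \<alpha>) (b_factor \<alpha>))
      + (\<Sum>j\<in>V. \<Sum>\<alpha>\<in>nbF F E j. ?M j \<alpha>) - (\<Sum>\<alpha>\<in>F. ln (factor_partition \<alpha>)))" .
  have vars: "(\<Sum>j\<in>V. ?N j * (\<Sum>a<d j. xlnx (Bv j a)))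
    = (\<Sum>j\<in>V. ?N j * rel_entropy {..<d j} (Bv j) (b_var j))
      + (\<Sum>j\<in>V. ?N j * (\<Sum>a<d j. Bv j a * ln (b_var j a)))"
    using var_entropy_eq[OF fe] by (simp add: distrib_left sum.distrib)
  have "(\<Sum>j\<in>V. \<Sum>\<alpha>\<in>nbF F E j. ?M j \<alpha>) = bethe_residual Bv
      + (\<Sum>j\<in>V. ?N j * (\<Sum>a<d j. Bv j a * ln (b_var j a))) + (\<Sum>\<alpha>\<in>F. ln (factor_partition \<alpha>))"
    unfolding bethe_residual_def sum_residual_coeff by (simp add: sum_subtractf)
  then show ?thesis unfolding bethe_def factors vars by (simp add: algebra_simps)
qed

text \<open>The right-hand side does not depend on a, so on such variables bethe_residual only sees
  the normalisation of Bv.\<close>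
lemma residual_coeff_eq:
  assumes j: "j \<in> V" "j \<notin> \<Gamma>" and a: "a < d j"
  shows "residual_coeff j a = (\<Sum>\<alpha>\<in>nbF F E j. ln (cn j \<alpha>))
    + (real (card (nbF F E j)) - 1) * ln (var_partition j)"
proof -
  let ?L = "\<lambda>\<beta>. ln (m \<beta> j a)"
  have m: "0 < m \<beta> j a" if "\<beta> \<in> nbF F E j" for \<beta> using m_pos that a nbF_iff by blast
  have ln_n: "ln (n j \<alpha> a) = ln (cn j \<alpha>) + ((\<Sum>\<beta>\<in>nbF F E j. ?L \<beta>) - ?L \<alpha>)"
    if \<alpha>: "\<alpha> \<in> nbF F E j" for \<alpha>
  proof -
    have e: "(j, \<alpha>) \<in> E" using \<alpha> nbF_iff by blast
    have "ln (\<Prod>\<beta>\<in>nbF F E j - {\<alpha>}. m \<beta> j a) = (\<Sum>\<beta>\<in>nbF F E j - {\<alpha>}. ?L \<beta>)"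
      using finite_nbF m by (intro ln_prod) (auto simp: less_imp_neq[symmetric])
    moreover have "0 < (\<Prod>\<beta>\<in>nbF F E j - {\<alpha>}. m \<beta> j a)" using m by (intro prod_pos) auto
    ultimately show ?thesis
      using n_fixed[OF e j(2) a] cn_pos[OF e] sum_diff1[OF finite_nbF, of ?L] \<alpha>
      by (simp add: ln_mult)
  qed
  have "ln (\<Prod>\<beta>\<in>nbF F E j. m \<beta> j a) = (\<Sum>\<beta>\<in>nbF F E j. ?L \<beta>)"
    using finite_nbF m by (intro ln_prod) (auto simp: less_imp_neq[symmetric])
  then have ln_b: "ln (b_var j a) = (\<Sum>\<beta>\<in>nbF F E j. ?L \<beta>) - ln (var_partition j)"
    using var_weight_pos[OF j(2) a] var_partition_pos[OF j(1)] j(2)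
    by (simp add: b_var_eq ln_div var_weight_def)
  have "(\<Sum>\<alpha>\<in>nbF F E j. ln (n j \<alpha> a)) =
      (\<Sum>\<alpha>\<in>nbF F E j. ln (cn j \<alpha>) + ((\<Sum>\<beta>\<in>nbF F E j. ?L \<beta>) - ?L \<alpha>))"
    using ln_n by (rule sum.cong[OF refl])
  also have "\<dots> = (\<Sum>\<alpha>\<in>nbF F E j. ln (cn j \<alpha>))
      + (real (card (nbF F E j)) - 1) * (\<Sum>\<beta>\<in>nbF F E j. ?L \<beta>)"
    by (simp add: sum.distrib sum_subtractf algebra_simps)
  finally show ?thesis unfolding residual_coeff_def ln_b by (simp add: algebra_simps)
qed

lemma bethe_residual_feasible:
  assumes fe: "feasible V F E d \<Gamma> \<mu> Bv Bf"
  shows "bethe_residual Bv = bethe_residual b_var"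
proof -
  have "(\<Sum>a<d j. Bv j a * residual_coeff j a) = (\<Sum>a<d j. b_var j a * residual_coeff j a)"
    if j: "j \<in> V" for j
  proof (cases "j \<in> \<Gamma>")
    case True
    then show ?thesis using feasibleD(3)[OF fe True] by (simp add: bp_var_belief_def)
  next
    case False
    then have "(\<Sum>a<d j. B j a * residual_coeff j a) = residual_coeff j 0"
      if "(\<Sum>a<d j. B j a) = 1" for B
      using residual_coeff_eq[OF j False] d_pos[OF j] that
      by (simp add: sum_distrib_right[symmetric])
    then show ?thesis using feasible_var_sum[OF fe j] feasible_var_sum[OF feasible_bp j] by simp
  qed
  then show ?thesis unfolding bethe_residual_def by simp
qed

theorem bethe_bp_le:
  assumes fe: "feasible V F E d \<Gamma> \<mu> Bv Bf"
  shows "bethe V F E d \<epsilon> C b_var b_factor \<le> bethe V F E d \<epsilon> C Bv Bf"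
proof -
  have "bethe V F E d \<epsilon> C b_var b_factor = \<epsilon> * bethe_residual b_var"
    using bethe_eq_divergences[OF feasible_bp] by (simp add: rel_entropy_self)
  also have "\<dots> = \<epsilon> * bethe_residual Bv" using bethe_residual_feasible[OF fe] by simp
  also have "\<dots> \<le> bethe V F E d \<epsilon> C Bv Bf"
    using bethe_eq_divergences[OF fe] divergence_balance[OF fe] eps_pos by simp
  finally show ?thesis .
qed

end

lemma edge_choice:
  assumes "\<forall>(j, \<alpha>)\<in>E. \<exists>c>0. P j \<alpha> c"
  obtains c where "\<And>j \<alpha>. (j, \<alpha>) \<in> E \<Longrightarrow> 0 < c j \<alpha> \<and> P j \<alpha> (c j \<alpha>)"
proof -
  have "\<forall>e\<in>E. \<exists>c. 0 < c \<and> P (fst e) (snd e) c" using assms by auto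
  from bchoice[OF this] obtain c where "\<forall>e\<in>E. 0 < c e \<and> P (fst e) (snd e) (c e)" by blast
  then show thesis by (intro that[of "curry c"]) auto
qed

theorem theorem1:
  fixes V :: "'v set" and F :: "'f set" and E :: "('v \<times> 'f) set"
    and d :: "'v \<Rightarrow> nat" and \<epsilon> :: real
    and C :: "'f \<Rightarrow> ('v \<Rightarrow> nat) \<Rightarrow> real"
    and \<Gamma> :: "'v set" and \<mu> :: "'v \<Rightarrow> nat \<Rightarrow> real"
    and m :: "'f \<Rightarrow> 'v \<Rightarrow> nat \<Rightarrow> real" and n :: "'v \<Rightarrow> 'f \<Rightarrow> nat \<Rightarrow> real"
  assumes tree: "factor_tree V F E"
    and F_ne: "F \<noteq> {}"
    and d_pos: "\<forall>j\<in>V. d j > 0"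
    and eps: "\<epsilon> > 0"
    and Gamma_sub: "\<Gamma> \<subseteq> V"
    and Gamma_leaf: "\<forall>j\<in>\<Gamma>. card (nbF F E j) = 1"
    and mu_nonneg: "\<forall>j\<in>\<Gamma>. \<forall>a<d j. \<mu> j a \<ge> 0"
    and mu_sum: "\<forall>j\<in>\<Gamma>. (\<Sum>a<d j. \<mu> j a) = 1"
    and m_pos: "\<forall>(j, \<alpha>)\<in>E. \<forall>a<d j. m \<alpha> j a > 0"
    and n_nonneg: "\<forall>(j, \<alpha>)\<in>E. \<forall>a<d j. n j \<alpha> a \<ge> 0"
    and fix_m: "\<forall>(j, \<alpha>)\<in>E. \<exists>c>0. \<forall>a<d j.
        m \<alpha> j a = c * (\<Sum>x\<in>configs_fix V E d \<alpha> j a.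
                          exp (- C \<alpha> x / \<epsilon>) * (\<Prod>i\<in>nbV V E \<alpha> - {j}. n i \<alpha> (x i)))"
    and fix_n: "\<forall>(j, \<alpha>)\<in>E. j \<notin> \<Gamma> \<longrightarrow> (\<exists>c>0. \<forall>a<d j.
        n j \<alpha> a = c * (\<Prod>\<beta>\<in>nbF F E j - {\<alpha>}. m \<beta> j a))"
    and fix_n_Gamma: "\<forall>(j, \<alpha>)\<in>E. j \<in> \<Gamma> \<longrightarrow> (\<exists>c>0. \<forall>a<d j.
        n j \<alpha> a = c * (\<mu> j a * inverse (m \<alpha> j a)))"
  shows "feasible V F E d \<Gamma> \<mu> (bp_var_belief F E d \<Gamma> \<mu> m) (bp_factor_belief V E d \<epsilon> C n)
       \<and> (\<forall>Bv Bf. feasible V F E d \<Gamma> \<mu> Bv Bf \<longrightarrow>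
            bethe V F E d \<epsilon> C (bp_var_belief F E d \<Gamma> \<mu> m) (bp_factor_belief V E d \<epsilon> C n)
              \<le> bethe V F E d \<epsilon> C Bv Bf)"
proof -
  define m_target where "m_target j \<alpha> a =
    (\<Sum>x\<in>configs_fix V E d \<alpha> j a. exp (- C \<alpha> x / \<epsilon>) * (\<Prod>i\<in>nbV V E \<alpha> - {j}. n i \<alpha> (x i)))"
    for j \<alpha> a
  define n_target where "n_target j \<alpha> a =
    (if j \<in> \<Gamma> then \<mu> j a * inverse (m \<alpha> j a) else \<Prod>\<beta>\<in>nbF F E j - {\<alpha>}. m \<beta> j a)" for j \<alpha> a
  obtain cm where cm: "\<And>j \<alpha>. (j, \<alpha>) \<in> E \<Longrightarrow>
      0 < cm j \<alpha> \<and> (\<forall>a<d j. m \<alpha> j a = cm j \<alpha> * m_target j \<alpha> a)"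
    using edge_choice[OF fix_m[folded m_target_def]] by blast
  have "\<forall>(j, \<alpha>)\<in>E. \<exists>c>0. \<forall>a<d j. n j \<alpha> a = c * n_target j \<alpha> a"
  proof clarify
    fix j \<alpha> assume e: "(j, \<alpha>) \<in> E"
    show "\<exists>c>0. \<forall>a<d j. n j \<alpha> a = c * n_target j \<alpha> a"
      using bspec[OF fix_n e] bspec[OF fix_n_Gamma e] by (cases "j \<in> \<Gamma>") (auto simp: n_target_def)
  qed
  then obtain cn where cn: "\<And>j \<alpha>. (j, \<alpha>) \<in> E \<Longrightarrow>
      0 < cn j \<alpha> \<and> (\<forall>a<d j. n j \<alpha> a = cn j \<alpha> * n_target j \<alpha> a)"
    by (rule edge_choice) blast
  interpret bp_fixed_point V F E d \<epsilon> C \<Gamma> \<mu> m n cm cn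
    using tree factor_tree_nbF_nonempty[OF tree F_ne] d_pos eps mu_nonneg mu_sum m_pos cm cn
    by unfold_locales (auto simp: factor_tree_def m_target_def n_target_def)
  show ?thesis using feasible_bp bethe_bp_le by blast
qed

end
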